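(* If $(A_n)_{n=0}^{\infty}$ is an Appell sequence, the following statements are equivalent: (a) for all integers $n\geq0$, $A_n=A^*_n$, i.e. the Appell sequence is self-dual; (b) for all partitions $\lambda$, $A_{\lambda}=A_{\lambda'}$, where $\lambda'$ is the conjugate partition; (c) for all even integers $n>0$, $c_n=0$.
   Context: An Appell sequence is a sequence of polynomials $(A_n)_{n\ge0}$ with $A_0=1$ and $A_n'=nA_{n-1}$ for $n\ge1$; it satisfies $\sum_k A_k(x)t^k/k!=e^{xt}f_A(t)$ with $f_A(0)=1$, and the constants $c_k$ are defined by $\log f_A(t)=\sum_{k\ge1}c_kt^k/k!$. For a partition $\lambda$ of length $r$, let $(n_1,\dots,n_r)=(\lambda_r,\lambda_{r-1}+1,\dots,\lambda_1+r-1)$ and $A_\lambda=\operatorname{Wr}[A_{n_1},\dots,A_{n_r}]/\Delta(n_1,\dots,n_r)$, where $\operatorname{Wr}$ is the Wronskian and $\Delta$ the Vandermonde determinant $\prod_{i<j}(x_j-x_i)$. The dual sequence is $A^*_n=A_{(1^n)}$, with $(1^n)=(1,\dots,1)$ ($n$ ones). *)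

theory Defs
  imports "HOL-Computational_Algebra.Polynomial"
          "HOL-Computational_Algebra.Formal_Power_Series"
          "Jordan_Normal_Form.Determinant"
begin

definition appell :: "(nat \<Rightarrow> complex poly) \<Rightarrow> bool" where
  "appell A \<longleftrightarrow> A 0 = 1 \<and> (\<forall>n\<ge>1. pderiv (A n) = smult (of_nat n) (A (n - 1)))"

text \<open>The series f_A(t) with sum_k A_k(x) t^k/k! = e^{xt} f_A(t); evaluating at x = 0
  gives f_A(t) = sum_k A_k(0) t^k / k!.\<close>
definition appell_f :: "(nat \<Rightarrow> complex poly) \<Rightarrow> complex fps" where
  "appell_f A = Abs_fps (\<lambda>k. poly (A k) 0 / fact k)"

definition fps_log :: "complex fps \<Rightarrow> complex fps" where
  "fps_log f = fps_integral (fps_deriv f / f) 0"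

definition appell_c :: "(nat \<Rightarrow> complex poly) \<Rightarrow> nat \<Rightarrow> complex" where
  "appell_c A k = fact k * fps_nth (fps_log (appell_f A)) k"

definition wronskian :: "nat \<Rightarrow> (nat \<Rightarrow> complex poly) \<Rightarrow> complex poly" where
  "wronskian r F = det (mat r r (\<lambda>(i, j). (pderiv ^^ i) (F j)))"

definition vandermonde :: "nat \<Rightarrow> (nat \<Rightarrow> nat) \<Rightarrow> complex" where
  "vandermonde r x = (\<Prod>j<r. \<Prod>i<j. of_nat (x j) - of_nat (x i))"

definition is_partition :: "nat list \<Rightarrow> bool" where
  "is_partition lam \<longleftrightarrow> sorted_wrt (\<ge>) lam \<and> (\<forall>x\<in>set lam. 0 < x)"

definition conj_partition :: "nat list \<Rightarrow> nat list" where
  "conj_partition lam =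
     map (\<lambda>j. length (filter (\<lambda>x. j \<le> x) lam)) [1..<Suc (if lam = [] then 0 else hd lam)]"

text \<open>The sequence (n_1,...,n_r) = (lambda_r, lambda_{r-1}+1, ..., lambda_1+r-1),
  zero-indexed: n_i = lambda_(r-i) + i - 1 (i = 1..r) becomes index i-1.\<close>
definition partition_degrees :: "nat list \<Rightarrow> nat \<Rightarrow> nat" where
  "partition_degrees lam i = lam ! (length lam - 1 - i) + i"

definition appell_partition :: "(nat \<Rightarrow> complex poly) \<Rightarrow> nat list \<Rightarrow> complex poly" where
  "appell_partition A lam =
     smult (1 / vandermonde (length lam) (partition_degrees lam))
       (wronskian (length lam) (\<lambda>i. A (partition_degrees lam i)))"

definition appell_dual :: "(nat \<Rightarrow> complex poly) \<Rightarrow> nat \<Rightarrow> complex poly" where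
  "appell_dual A n = appell_partition A (replicate n 1)"

end

(*
  Evaluating the Wronskian at x turns A_lambda(x) into a quotient of two Jacobi-Trudi
  determinants: that of the coefficients h_k(x) of H_x(t) = sum_k A_k(x) t^k / k! = e^(xt) f_A(t),
  divided by that of the coefficients 1/k! of e^t (the Vandermonde factor).  Jacobi's
  complementary minor theorem gives the classical duality s_lambda(h) = s_lambda'(e) whenever
  E(t) H(-t) = 1, so A_lambda' is obtained from A_lambda by replacing H_x by 1/H_x(-t); for the
  one-row partition this says that A*_n(x)/n! is the n-th coefficient of 1/H_x(-t).  Hence (a)
  and (b) both amount to H_x(t) H_x(-t) = 1, i.e. f_A(t) f_A(-t) = 1, and taking logarithms
  this is log f_A(t) + log f_A(-t) = 2 sum_{n even} c_n t^n / n! = 0, which is (c).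
*)
theory Submission
  imports Defs
begin

no_notation vec_index (infixl "$" 100)
notation fps_nth (infixl "$" 75)

section \<open>Determinants\<close>

lemma det_mat_scale_rows_cols:
  fixes a b :: "nat \<Rightarrow> 'a::comm_ring_1"
  shows "det (mat n n (\<lambda>(i,j). a i * b j * X i j)) =
         (\<Prod>i<n. a i) * (\<Prod>j<n. b j) * det (mat n n (\<lambda>(i,j). X i j))"
proof -
  have c1: "mat n n (\<lambda>(i,j). a i * b j * X i j) \<in> carrier_mat n n"
    and c2: "mat n n (\<lambda>(i,j). X i j) \<in> carrier_mat n n" by simp_all
  have "det (mat n n (\<lambda>(i,j). a i * b j * X i j)) =
     (\<Sum>p\<in>{p. p permutes {0..<n}}. signof p * (\<Prod>i=0..<n. a i * b (p i) * X i (p i)))"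
    unfolding det_def'[OF c1] by (intro sum.cong refl arg_cong2[where f = "(*)"] prod.cong)
      (auto simp: permutes_def)
  also have "\<dots> = (\<Sum>p\<in>{p. p permutes {0..<n}}.
      (\<Prod>i<n. a i) * (\<Prod>j<n. b j) * (signof p * (\<Prod>i=0..<n. X i (p i))))"
  proof (intro sum.cong refl)
    fix p assume "p \<in> {p. p permutes {0..<n}}"
    then have "(\<Prod>i=0..<n. b (p i)) = (\<Prod>j=0..<n. b j)"
      using prod.permute[of p "{0..<n}" b] by (simp add: comp_def)
    then show "signof p * (\<Prod>i=0..<n. a i * b (p i) * X i (p i)) =
        (\<Prod>i<n. a i) * (\<Prod>j<n. b j) * (signof p * (\<Prod>i=0..<n. X i (p i)))"
      by (simp add: prod.distrib atLeast0LessThan)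
  qed
  also have "\<dots> = (\<Prod>i<n. a i) * (\<Prod>j<n. b j) * det (mat n n (\<lambda>(i,j). X i j))"
    unfolding det_def'[OF c2] sum_distrib_left
    by (intro sum.cong refl arg_cong2[where f = "(*)"] prod.cong) (auto simp: permutes_def)
  finally show ?thesis .
qed

lemma det_mat_reverse:
  fixes X :: "nat \<Rightarrow> nat \<Rightarrow> 'a::comm_ring_1"
  shows "det (mat n n (\<lambda>(i,j). X (n - 1 - i) (n - 1 - j))) = det (mat n n (\<lambda>(i,j). X i j))"
proof -
  define r where "r = (\<lambda>i. if i < n then n - 1 - i else i)"
  have r: "r permutes {0..<n}"
    by (rule bij_imp_permutes) (auto intro!: bij_betwI[where g = r] simp: r_def)
  let ?Y = "mat n n (\<lambda>(i,j). X i (n - 1 - j))"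
  let ?Z = "mat n n (\<lambda>(i,j). X j i)"
  have "mat n n (\<lambda>(i,j). X (n - 1 - i) (n - 1 - j)) = mat n n (\<lambda>(i,j). ?Y $$ (r i, j))"
    by (intro eq_matI) (auto simp: r_def)
  then have rows: "det (mat n n (\<lambda>(i,j). X (n - 1 - i) (n - 1 - j))) = signof r * det ?Y"
    using det_permute_rows[OF _ r, of ?Y] by simp
  have "transpose_mat ?Y = mat n n (\<lambda>(i,j). ?Z $$ (r i, j))"
    by (intro eq_matI) (auto simp: r_def)
  then have cols: "det ?Y = signof r * det ?Z"
    using det_permute_rows[OF _ r, of ?Z] det_transpose[of ?Y n] by simp
  have "det ?Z = det (transpose_mat ?Z)" using det_transpose[of ?Z n] by simp
  also have "transpose_mat ?Z = mat n n (\<lambda>(i,j). X i j)" by (intro eq_matI) auto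
  finally have "det ?Z = det (mat n n (\<lambda>(i,j). X i j))" .
  moreover have "signof r * signof r = (1::'a)" by (simp add: sign_def)
  ultimately show ?thesis
    unfolding rows cols by (metis mult.assoc mult_1)
qed

lemma strict_mono_gap:
  assumes "\<And>k. Suc k < M \<Longrightarrow> s k < s (Suc k)" and "k + d < M"
  shows "s k + d \<le> s (k + d)"
  using assms(2)
proof (induction d)
  case (Suc d)
  then show ?case using assms(1)[of "k + d"] by fastforce
qed simp

lemma strict_mono_self_map_eq_id:
  assumes "\<And>k. Suc k < M \<Longrightarrow> s k < s (Suc k)" and "\<And>k. k < M \<Longrightarrow> s k < M"
    and "k < M"
  shows "s k = k"
proof -
  have "s 0 + k \<le> s k"
    using strict_mono_gap[of M s 0 k] assms(1,3) by simp
  moreover have "s k + (M - 1 - k) \<le> s (M - 1)"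
    using strict_mono_gap[of M s k "M - 1 - k"] assms(1,3) by simp
  moreover have "s (M - 1) < M" using assms(2,3) by simp
  ultimately show ?thesis by linarith
qed

lemma det_first_column_unit:
  fixes C :: "nat \<Rightarrow> nat \<Rightarrow> 'a::comm_ring_1"
  assumes "m < N"
  shows "det (mat N N (\<lambda>(i,j). if j = 0 then (if i = m then 1 else 0) else C i j)) =
         (-1)^m * det (mat (N - 1) (N - 1) (\<lambda>(i,j). C (if i < m then i else Suc i) (Suc j)))"
proof -
  define Q where "Q = mat N N (\<lambda>(i,j). if j = 0 then (if i = m then 1 else 0) else C i j)"
  have "det Q = (\<Sum>i<N. Q $$ (i,0) * cofactor Q i 0)"
    by (rule laplace_expansion_column) (use assms in \<open>simp_all add: Q_def\<close>)
  also have "\<dots> = (\<Sum>i<N. if i = m then cofactor Q i 0 else 0)"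
    by (intro sum.cong refl) (auto simp: Q_def)
  also have "\<dots> = (-1)^m * det (mat_delete Q m 0)"
    using assms by (simp add: cofactor_def)
  also have "mat_delete Q m 0 = mat (N - 1) (N - 1) (\<lambda>(i,j). C (if i < m then i else Suc i) (Suc j))"
    by (intro eq_matI) (auto simp: mat_delete_def Q_def)
  finally show ?thesis
    by (simp add: Q_def)
qed

text \<open>The \<open>s k\<close> enumerate, in increasing order, the rows not hit by the unit
  columns \<open>n j\<close>.\<close>
lemma det_unit_columns:
  fixes C :: "nat \<Rightarrow> nat \<Rightarrow> 'a::comm_ring_1"
  assumes "r \<le> N"
    and "\<And>j. Suc j < r \<Longrightarrow> n j < n (Suc j)"
    and "\<And>k. Suc k < N - r \<Longrightarrow> s k < s (Suc k)"
    and "\<And>j. j < r \<Longrightarrow> n j < N"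
    and "\<And>k. k < N - r \<Longrightarrow> s k < N"
    and "\<And>j k. j < r \<Longrightarrow> k < N - r \<Longrightarrow> n j \<noteq> s k"
  shows "det (mat N N (\<lambda>(i,j). if j < r then (if i = n j then 1 else 0) else C i j)) =
         (\<Prod>j<r. (-1)^(n j - j)) * det (mat (N - r) (N - r) (\<lambda>(k,l). C (s k) (r + l)))"
  using assms
proof (induction r arbitrary: N n s C)
  case 0
  have "s k = k" if "k < N" for k
    by (rule strict_mono_self_map_eq_id[of N s]) (use 0 that in auto)
  then have "mat N N (\<lambda>(k,l). C (s k) l) = mat N N (\<lambda>(i,j). C i j)"
    by (intro eq_matI) simp_all
  then show ?case by simp
next
  case (Suc r)
  define ins where "ins = (\<lambda>i. if i < n 0 then i else Suc i)"
  define n' where "n' = (\<lambda>j. n (Suc j) - 1)"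
  define s' where "s' = (\<lambda>k. if s k < n 0 then s k else s k - 1)"
  define C' where "C' = (\<lambda>i j. C (ins i) (Suc j))"
  have n0_less: "n 0 < n (Suc j)" if "j < r" for j
    using strict_mono_gap[of "Suc r" n 0 "Suc j"] Suc.prems(2) that by simp
  have s_neq: "s k \<noteq> n 0" if "k < N - Suc r" for k
    using Suc.prems(6)[of 0 k] that by auto
  have "det (mat N N (\<lambda>(i,j). if j < Suc r then (if i = n j then 1 else 0) else C i j)) =
      det (mat N N (\<lambda>(i,j). if j = 0 then (if i = n 0 then 1 else 0)
                               else if j < Suc r then (if i = n j then 1 else 0) else C i j))"
    by (intro arg_cong[where f = det] eq_matI) auto
  also have "\<dots> = (-1)^n 0 * det (mat (N - 1) (N - 1) (\<lambda>(i,j).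
      (\<lambda>i j. if j < Suc r then (if i = n j then 1 else 0) else C i j) (ins i) (Suc j)))"
    unfolding ins_def by (rule det_first_column_unit) (use Suc.prems(4)[of 0] in simp)
  also have "mat (N - 1) (N - 1) (\<lambda>(i,j).
      (\<lambda>i j. if j < Suc r then (if i = n j then 1 else 0) else C i j) (ins i) (Suc j)) =
      mat (N - 1) (N - 1) (\<lambda>(i,j). if j < r then (if i = n' j then 1 else 0) else C' i j)"
    by (intro eq_matI) (auto simp: ins_def n'_def C'_def dest: n0_less)
  finally have expand:
    "det (mat N N (\<lambda>(i,j). if j < Suc r then (if i = n j then 1 else 0) else C i j)) =
     (-1)^n 0 * det (mat (N - 1) (N - 1) (\<lambda>(i,j). if j < r then (if i = n' j then 1 else 0) else C' i j))" .
  have IH: "det (mat (N - 1) (N - 1) (\<lambda>(i,j). if j < r then (if i = n' j then 1 else 0) else C' i j)) =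
      (\<Prod>j<r. (-1)^(n' j - j)) * det (mat (N - 1 - r) (N - 1 - r) (\<lambda>(k,l). C' (s' k) (r + l)))"
  proof (rule Suc.IH)
    show "r \<le> N - 1" using Suc.prems(1) by simp
    show "n' j < n' (Suc j)" if "Suc j < r" for j
      using Suc.prems(2)[of "Suc j"] n0_less[of j] that by (simp add: n'_def)
    show "s' k < s' (Suc k)" if "Suc k < N - 1 - r" for k
      using Suc.prems(3)[of k] s_neq[of k] s_neq[of "Suc k"] that by (auto simp: s'_def)
    show "n' j < N - 1" if "j < r" for j
      using Suc.prems(4)[of "Suc j"] n0_less[of j] that by (simp add: n'_def)
    show "s' k < N - 1" if "k < N - 1 - r" for k
      using Suc.prems(5)[of k] s_neq[of k] Suc.prems(4)[of 0] that by (auto simp: s'_def)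
    show "n' j \<noteq> s' k" if "j < r" "k < N - 1 - r" for j k
      using Suc.prems(6)[of "Suc j" k] n0_less[of j] s_neq[of k] that by (auto simp: s'_def n'_def)
  qed
  have "ins (s' k) = s k" if "k < N - Suc r" for k
    using s_neq[OF that] by (auto simp: ins_def s'_def)
  then have complement: "mat (N - 1 - r) (N - 1 - r) (\<lambda>(k,l). C' (s' k) (r + l)) =
      mat (N - Suc r) (N - Suc r) (\<lambda>(k,l). C (s k) (Suc r + l))"
    by (intro eq_matI) (auto simp: C'_def)
  have sign: "(\<Prod>j<Suc r. (-1::'a)^(n j - j)) = (-1)^n 0 * (\<Prod>j<r. (-1)^(n' j - j))"
    unfolding prod.lessThan_Suc_shift by (simp add: n'_def)
  show ?case
    unfolding expand IH complement sign by (simp add: mult.assoc)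
qed

definition upper_toeplitz :: "(nat \<Rightarrow> 'a::zero) \<Rightarrow> nat \<Rightarrow> nat \<Rightarrow> 'a" where
  "upper_toeplitz a i j = (if i \<le> j then a (j - i) else 0)"

lemma upper_toeplitz_mult:
  fixes F G :: "'a::comm_semiring_1 fps"
  assumes "j < N"
  shows "(\<Sum>k<N. upper_toeplitz (fps_nth F) i k * upper_toeplitz (fps_nth G) k j) =
         upper_toeplitz (fps_nth (F * G)) i j"
proof (cases "i \<le> j")
  case True
  have "(\<Sum>k<N. upper_toeplitz (fps_nth F) i k * upper_toeplitz (fps_nth G) k j) =
        (\<Sum>k=0 + i..(j - i) + i. F $ (k - i) * G $ (j - k))"
    by (rule sum.mono_neutral_cong_right) (use assms True in \<open>auto simp: upper_toeplitz_def\<close>)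
  also have "\<dots> = (\<Sum>k=0..j - i. F $ k * G $ (j - i - k))"
    by (subst sum.shift_bounds_cl_nat_ivl) (simp add: diff_diff_add add.commute)
  finally show ?thesis using True by (simp add: upper_toeplitz_def fps_mult_nth)
next
  case False
  then show ?thesis by (auto intro!: sum.neutral simp: upper_toeplitz_def)
qed

lemma det_upper_toeplitz:
  "det (mat N N (\<lambda>(i,j). upper_toeplitz a i j)) = (a 0 :: 'a::comm_ring_1)^N"
proof -
  have "det (mat N N (\<lambda>(i,j). upper_toeplitz a i j)) =
        prod_list (diag_mat (mat N N (\<lambda>(i,j). upper_toeplitz a i j)))"
    by (rule det_upper_triangular) (auto simp: upper_toeplitz_def)
  also have "diag_mat (mat N N (\<lambda>(i,j). upper_toeplitz a i j)) = replicate N (a 0)"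
    by (rule nth_equalityI) (auto simp: diag_mat_def upper_toeplitz_def)
  finally show ?thesis by simp
qed

lemma upper_toeplitz_mult_columns:
  fixes E G :: "'a::comm_ring_1 fps"
  assumes "E * G = 1" and "\<And>j. j < r \<Longrightarrow> n j < N"
  shows "mat N N (\<lambda>(i,j). upper_toeplitz (fps_nth E) i j) *
         mat N N (\<lambda>(i,j). if j < r then upper_toeplitz (fps_nth G) i (n j) else if i = j then 1 else 0) =
         mat N N (\<lambda>(i,j). if j < r then (if i = n j then 1 else 0) else upper_toeplitz (fps_nth E) i j)"
proof -
  have "(\<Sum>k<N. upper_toeplitz (fps_nth E) i k *
          (if j < r then upper_toeplitz (fps_nth G) k (n j) else if k = j then 1 else 0)) =
        (if j < r then (if i = n j then 1 else 0) else upper_toeplitz (fps_nth E) i j)"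
    if "j < N" for i j
  proof (cases "j < r")
    case True
    then show ?thesis
      using upper_toeplitz_mult[of "n j" N E i G] assms by (simp add: upper_toeplitz_def)
  next
    case False
    then show ?thesis
      using that by (simp add: if_distrib[of "\<lambda>x. _ * x"] cong: if_cong)
  qed
  then show ?thesis
    by (intro eq_matI) (simp_all add: scalar_prod_def atLeast0LessThan)
qed

text \<open>Jacobi's complementary minor theorem for the triangular Toeplitz matrices of \<open>E\<close>
  and of its inverse \<open>G\<close>: multiplying by the matrix of \<open>E\<close> turns the columns \<open>n j\<close>
  of the matrix of \<open>G\<close> into unit vectors.\<close>
lemma det_toeplitz_complementary_minor:
  fixes E G :: "'a::idom fps"
  assumes EG: "E * G = 1" and E0: "E $ 0 = 1" and "r \<le> N"
    and "\<And>j. Suc j < r \<Longrightarrow> n j < n (Suc j)"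
    and "\<And>k. Suc k < N - r \<Longrightarrow> s k < s (Suc k)"
    and n_less: "\<And>j. j < r \<Longrightarrow> n j < N"
    and "\<And>k. k < N - r \<Longrightarrow> s k < N"
    and "\<And>j k. j < r \<Longrightarrow> k < N - r \<Longrightarrow> n j \<noteq> s k"
  shows "det (mat r r (\<lambda>(i,j). upper_toeplitz (fps_nth G) i (n j))) =
         (\<Prod>j<r. (-1)^(n j - j)) *
         det (mat (N - r) (N - r) (\<lambda>(k,l). upper_toeplitz (fps_nth E) (s k) (r + l)))"
proof -
  define Gn where "Gn = mat r r (\<lambda>(i,j). upper_toeplitz (fps_nth G) i (n j))"
  define T where "T = mat N N (\<lambda>(i,j). upper_toeplitz (fps_nth E) i j)"
  define M where "M = mat N N (\<lambda>(i,j). if j < r then upper_toeplitz (fps_nth G) i (n j)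
                                      else if i = j then 1 else 0)"
  have "M = four_block_mat Gn (0\<^sub>m r (N - r))
              (mat (N - r) r (\<lambda>(i,j). upper_toeplitz (fps_nth G) (i + r) (n j))) (1\<^sub>m (N - r))"
    by (intro eq_matI) (use \<open>r \<le> N\<close> in \<open>auto simp: M_def Gn_def\<close>)
  moreover have "det (four_block_mat Gn (0\<^sub>m r (N - r))
      (mat (N - r) r (\<lambda>(i,j). upper_toeplitz (fps_nth G) (i + r) (n j))) (1\<^sub>m (N - r))) =
      det Gn * det (1\<^sub>m (N - r) :: 'a mat)"
    by (rule det_four_block_mat_upper_right_zero) (auto simp: Gn_def)
  ultimately have "det M = det Gn" by simp
  moreover have "det (T * M) = det T * det M"
    by (rule det_mult) (auto simp: T_def M_def)
  moreover have "det T = 1"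
    using det_upper_toeplitz[of N "fps_nth E"] E0 by (simp add: T_def)
  ultimately show ?thesis
    using upper_toeplitz_mult_columns[OF EG n_less, of r] assms(3-)
      det_unit_columns[of r N n s "upper_toeplitz (fps_nth E)"]
    by (simp add: Gn_def T_def M_def)
qed

section \<open>Partitions and the Jacobi--Trudi duality\<close>

lemma minus_one_power_mult_diff:
  assumes "i \<le> m"
  shows "(-1::'a::comm_ring_1)^i * (-1)^m = (-1)^(m - i)"
proof -
  obtain d where m: "m = i + d" using assms le_Suc_ex by blast
  have "(-1::'a)^i * (-1)^i = ((-1) * (-1))^i" by (rule power_mult_distrib[symmetric])
  then have "(-1::'a)^i * (-1)^i = 1" by simp
  then have "(-1::'a)^i * ((-1)^i * (-1)^d) = (-1)^d" by (simp flip: mult.assoc)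
  then show ?thesis by (simp add: m power_add)
qed

lemma sorted_desc_nth_le_hd:
  assumes "sorted_wrt (\<ge>) (lam::nat list)" and "i < length lam"
  shows "lam ! i \<le> hd lam"
  using assms by (cases lam; cases i) (auto simp: set_conv_nth)

lemma sorted_desc_nth_antimono:
  assumes "sorted_wrt (\<ge>) (lam::nat list)" and "i \<le> j" and "j < length lam"
  shows "lam ! j \<le> lam ! i"
  using assms by (metis le_neq_implies_less order.refl sorted_wrt_nth_less)

lemma less_length_filter_ge_iff:
  assumes "sorted_wrt (\<ge>) (lam::nat list)" and "i < length lam"
  shows "i < length (filter (\<lambda>x. m \<le> x) lam) \<longleftrightarrow> m \<le> lam ! i"
  using assms
proof (induction lam arbitrary: i)
  case (Cons a lam)
  show ?case
  proof (cases "m \<le> a")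
    case True
    then show ?thesis
      using Cons by (cases i) auto
  next
    case False
    with Cons.prems have "filter (\<lambda>x. m \<le> x) lam = []" and "\<not> m \<le> (a # lam) ! i"
      by (auto simp: filter_empty_conv nth_Cons split: nat.split dest!: nth_mem)
    with False show ?thesis by simp
  qed
qed simp

lemma length_conj_partition: "length (conj_partition lam) = (if lam = [] then 0 else hd lam)"
  by (simp add: conj_partition_def)

lemma nth_conj_partition:
  "k < length (conj_partition lam) \<Longrightarrow>
   conj_partition lam ! k = length (filter (\<lambda>x. Suc k \<le> x) lam)"
  by (auto simp: conj_partition_def simp del: upt_Suc split: if_splits)

lemma conj_partition_single: "0 < n \<Longrightarrow> conj_partition [n] = replicate n 1"
  by (rule nth_equalityI) (auto simp: conj_partition_def simp del: upt_Suc)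

lemma partition_degrees_strict_mono:
  assumes "sorted_wrt (\<ge>) lam" and "Suc j < length lam"
  shows "partition_degrees lam j < partition_degrees lam (Suc j)"
proof -
  have "lam ! (length lam - 1 - j) \<le> lam ! (length lam - 1 - Suc j)"
    by (rule sorted_desc_nth_antimono[OF assms(1)]) (use assms(2) in auto)
  then show ?thesis by (simp add: partition_degrees_def)
qed

lemma partition_degrees_less:
  assumes "sorted_wrt (\<ge>) lam" and "j < length lam"
  shows "partition_degrees lam j < length lam + hd lam"
proof -
  have "lam ! (length lam - 1 - j) \<le> hd lam"
    by (rule sorted_desc_nth_le_hd[OF assms(1)]) (use assms(2) in auto)
  then show ?thesis using assms(2) by (simp add: partition_degrees_def)
qed

text \<open>These enumerate the complement of the degrees \<open>partition_degrees lam j\<close> in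
  \<open>{0..<length lam + hd lam}\<close>.\<close>
definition partition_codegrees :: "nat list \<Rightarrow> nat \<Rightarrow> nat" where
  "partition_codegrees lam k = length lam + k - conj_partition lam ! k"

lemma conj_partition_nth_le_length:
  "k < length (conj_partition lam) \<Longrightarrow> conj_partition lam ! k \<le> length lam"
  by (simp add: nth_conj_partition)

lemma partition_codegrees_strict_mono:
  assumes "Suc k < length (conj_partition lam)"
  shows "partition_codegrees lam k < partition_codegrees lam (Suc k)"
proof -
  have "length (filter (\<lambda>x. Suc (Suc k) \<le> x) lam) \<le> length (filter (\<lambda>x. Suc k \<le> x) lam)"
    by (induction lam) auto
  then have "conj_partition lam ! Suc k \<le> conj_partition lam ! k"
    using assms by (simp add: nth_conj_partition)
  moreover have "conj_partition lam ! k \<le> length lam"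
    using assms by (simp add: conj_partition_nth_le_length)
  ultimately show ?thesis
    unfolding partition_codegrees_def by linarith
qed

lemma partition_codegrees_less:
  "k < length (conj_partition lam) \<Longrightarrow> partition_codegrees lam k < length lam + hd lam"
  by (auto simp: partition_codegrees_def length_conj_partition split: if_splits)

lemma partition_degrees_neq_codegrees:
  assumes "sorted_wrt (\<ge>) lam" and "j < length lam" and "k < length (conj_partition lam)"
  shows "partition_degrees lam j \<noteq> partition_codegrees lam k"
proof
  define i where "i = length lam - 1 - j"
  have "i < length lam" using assms(2) by (simp add: i_def)
  then have "i < conj_partition lam ! k \<longleftrightarrow> Suc k \<le> lam ! i"
    using less_length_filter_ge_iff[OF assms(1)] assms(3) by (simp add: nth_conj_partition)
  moreover assume "partition_degrees lam j = partition_codegrees lam k"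
  then have "lam ! i + conj_partition lam ! k = i + k + 1"
    using assms(2) conj_partition_nth_le_length[OF assms(3)]
    by (simp add: partition_degrees_def partition_codegrees_def i_def)
  ultimately show False by linarith
qed

text \<open>The Jacobi--Trudi determinant \<open>det (h (\<lambda>_a - a + b))\<close> with rows and columns
  reversed and transposed, so that entry \<open>(i, j)\<close> corresponds to the \<open>i\<close>-th derivative
  of \<open>A (partition_degrees lam j)\<close> in the Wronskian.\<close>
definition jacobi_trudi :: "(nat \<Rightarrow> 'a::comm_ring_1) \<Rightarrow> nat list \<Rightarrow> 'a" where
  "jacobi_trudi h lam = det (mat (length lam) (length lam)
      (\<lambda>(i,j). upper_toeplitz h i (partition_degrees lam j)))"

lemma jacobi_trudi_Nil [simp]: "jacobi_trudi h [] = 1"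
  by (simp add: jacobi_trudi_def)

lemma jacobi_trudi_single [simp]: "jacobi_trudi h [n] = h n"
  using det_single[of "mat 1 1 (\<lambda>(i,j). upper_toeplitz h i (partition_degrees [n] j))"]
  by (simp add: jacobi_trudi_def upper_toeplitz_def partition_degrees_def)

lemma fps_compose_uminus_X_nth [simp]:
  "(f oo - fps_X :: 'a::comm_ring_1 fps) $ n = (-1)^n * f $ n"
  by (simp add: fps_compose_uminus')

lemma det_toeplitz_compose_uminus_X:
  fixes H :: "'a::comm_ring_1 fps"
  assumes "\<And>j. j < r \<Longrightarrow> j \<le> n j"
  shows "det (mat r r (\<lambda>(i,j). upper_toeplitz (fps_nth (H oo - fps_X)) i (n j))) =
         (\<Prod>j<r. (-1)^(n j - j)) * det (mat r r (\<lambda>(i,j). upper_toeplitz (fps_nth H) i (n j)))"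
proof -
  have "mat r r (\<lambda>(i,j). upper_toeplitz (fps_nth (H oo - fps_X)) i (n j)) =
        mat r r (\<lambda>(i,j). (-1)^i * (-1)^(n j) * upper_toeplitz (fps_nth H) i (n j))"
    by (intro eq_matI) (auto simp: upper_toeplitz_def minus_one_power_mult_diff)
  moreover have "(\<Prod>i<r. (-1::'a)^i) * (\<Prod>j<r. (-1)^(n j)) = (\<Prod>j<r. (-1)^(n j - j))"
    using assms by (simp add: minus_one_power_mult_diff flip: prod.distrib)
  ultimately show ?thesis
    by (simp add: det_mat_scale_rows_cols)
qed

lemma jacobi_trudi_conj_partition_eq_minor:
  fixes E :: "'a::comm_ring_1 fps" and lam :: "nat list"
  defines "r \<equiv> length lam" and "c \<equiv> length (conj_partition lam)"
  shows "jacobi_trudi (fps_nth E) (conj_partition lam) =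
         det (mat c c (\<lambda>(k,l). upper_toeplitz (fps_nth E) (partition_codegrees lam k) (r + l)))"
proof -
  define lc where "lc = conj_partition lam"
  define Y where "Y = (\<lambda>l k. upper_toeplitz (fps_nth E) (partition_codegrees lam k) (r + l))"
  have "jacobi_trudi (fps_nth E) lc = det (mat c c (\<lambda>(i,j). Y (c - 1 - i) (c - 1 - j)))"
    unfolding jacobi_trudi_def
  proof (intro arg_cong[where f = det] eq_matI)
    fix i j
    assume "i < dim_row (mat c c (\<lambda>(i,j). Y (c - 1 - i) (c - 1 - j)))"
      and "j < dim_col (mat c c (\<lambda>(i,j). Y (c - 1 - i) (c - 1 - j)))"
    then have i: "i < c" and j: "j < c" by auto
    then have "lc ! (c - 1 - j) \<le> r"
      using conj_partition_nth_le_length[of "c - 1 - j" lam] by (simp add: lc_def c_def r_def)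
    then show "mat (length lc) (length lc)
        (\<lambda>(i,j). upper_toeplitz (fps_nth E) i (partition_degrees lc j)) $$ (i, j) =
        mat c c (\<lambda>(i,j). Y (c - 1 - i) (c - 1 - j)) $$ (i, j)"
      using i j
      by (auto simp: Y_def lc_def c_def r_def upper_toeplitz_def partition_degrees_def
          partition_codegrees_def intro!: arg_cong[where f = "fps_nth E"])
  qed (simp_all add: lc_def c_def)
  also have "\<dots> = det (mat c c (\<lambda>(i,j). Y i j))"
    by (rule det_mat_reverse)
  also have "mat c c (\<lambda>(i,j). Y i j) =
      transpose_mat (mat c c (\<lambda>(k,l). upper_toeplitz (fps_nth E) (partition_codegrees lam k) (r + l)))"
    by (intro eq_matI) (auto simp: Y_def)
  also have "det \<dots> =
      det (mat c c (\<lambda>(k,l). upper_toeplitz (fps_nth E) (partition_codegrees lam k) (r + l)))"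
    by (rule det_transpose[of _ c]) simp
  finally show ?thesis
    by (simp add: lc_def)
qed

theorem jacobi_trudi_conj_partition:
  fixes E H :: "'a::idom fps"
  assumes EH: "E * (H oo - fps_X) = 1" and E0: "E $ 0 = 1" and lam: "sorted_wrt (\<ge>) lam"
  shows "jacobi_trudi (fps_nth H) lam = jacobi_trudi (fps_nth E) (conj_partition lam)"
proof (cases "lam = []")
  case True
  then show ?thesis by (simp add: conj_partition_def)
next
  case False
  define r where "r = length lam"
  define c where "c = length (conj_partition lam)"
  define \<sigma> where "\<sigma> = (\<Prod>j<r. (-1::'a)^(partition_degrees lam j - j))"
  have hd: "hd lam = length (conj_partition lam)"
    using False by (simp add: length_conj_partition)
  have "\<sigma> * jacobi_trudi (fps_nth H) lam =
        det (mat r r (\<lambda>(i,j). upper_toeplitz (fps_nth (H oo - fps_X)) i (partition_degrees lam j)))"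
    unfolding \<sigma>_def jacobi_trudi_def r_def
    by (rule det_toeplitz_compose_uminus_X[symmetric]) (simp add: partition_degrees_def)
  also have "\<dots> = \<sigma> * det (mat (r + c - r) (r + c - r) (\<lambda>(k,l).
      upper_toeplitz (fps_nth E) (partition_codegrees lam k) (r + l)))"
    unfolding \<sigma>_def
    by (rule det_toeplitz_complementary_minor[OF EH E0])
      (use partition_degrees_strict_mono[OF lam] partition_codegrees_strict_mono[of _ lam]
           partition_degrees_less[OF lam] partition_codegrees_less[of _ lam]
           partition_degrees_neq_codegrees[OF lam]
       in \<open>auto simp: r_def c_def hd\<close>)
  also have "\<dots> = \<sigma> * jacobi_trudi (fps_nth E) (conj_partition lam)"
    by (simp add: jacobi_trudi_conj_partition_eq_minor r_def c_def)
  finally show ?thesis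
    by (simp add: \<sigma>_def)
qed

section \<open>Wronskians of Appell sequences\<close>

definition falling_factorial :: "'a::comm_ring_1 \<Rightarrow> nat \<Rightarrow> 'a" where
  "falling_factorial y i = (\<Prod>k<i. y - of_nat k)"

lemma falling_factorial_Suc:
  "falling_factorial y (Suc i) = falling_factorial y i * (y - of_nat i)"
  by (simp add: falling_factorial_def)

text \<open>Subtracting \<open>x 0 - (i - 1)\<close> times row \<open>i - 1\<close> from row \<open>i\<close> (the matrix \<open>L\<close>)
  leaves \<open>falling_factorial (x j) (i - 1) * (x j - x 0)\<close>.\<close>
lemma det_falling_factorial_vandermonde:
  fixes x :: "nat \<Rightarrow> 'a::comm_ring_1"
  shows "det (mat r r (\<lambda>(i,j). falling_factorial (x j) i)) = (\<Prod>j<r. \<Prod>i<j. x j - x i)"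
proof (induction r arbitrary: x)
  case 0
  then show ?case by simp
next
  case (Suc r)
  define V where "V = mat (Suc r) (Suc r) (\<lambda>(i,j). falling_factorial (x j) i)"
  define L where "L = mat (Suc r) (Suc r)
    (\<lambda>(i,k). if k = i then 1 else if Suc k = i then - (x 0 - of_nat k) else 0)"
  define W where "W = mat (Suc r) (Suc r)
    (\<lambda>(i,j). if i = 0 then 1 else falling_factorial (x j) (i - 1) * (x j - x 0))"
  have V: "V \<in> carrier_mat (Suc r) (Suc r)" and L: "L \<in> carrier_mat (Suc r) (Suc r)"
    by (simp_all add: V_def L_def)
  have "det L = prod_list (diag_mat L)"
    by (rule det_lower_triangular[OF _ L]) (auto simp: L_def)
  also have "diag_mat L = replicate (Suc r) 1"
    by (rule nth_equalityI) (auto simp: diag_mat_def L_def simp del: upt_Suc replicate_Suc)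
  finally have det_L: "det L = 1" by simp
  have "L * V = W"
  proof (intro eq_matI)
    fix i j assume "i < dim_row W" "j < dim_col W"
    then have i: "i < Suc r" and j: "j < Suc r" by (auto simp: W_def)
    have "(L * V) $$ (i,j) = (\<Sum>k<Suc r. L $$ (i,k) * V $$ (k,j))"
      using L V i j by (simp add: scalar_prod_def atLeast0LessThan)
    also have "\<dots> = (\<Sum>k<Suc r. (if k = i then falling_factorial (x j) k else 0) +
        (if Suc k = i then - (x 0 - of_nat k) * falling_factorial (x j) k else 0))"
      by (intro sum.cong refl) (use i j in \<open>auto simp: L_def V_def\<close>)
    also have "\<dots> = falling_factorial (x j) i +
        (if i = 0 then 0 else - (x 0 - of_nat (i - 1)) * falling_factorial (x j) (i - 1))"
      using i by (cases i) (simp_all add: sum.distrib)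
    also have "\<dots> = W $$ (i,j)"
      using i j by (cases i) (simp_all add: W_def falling_factorial_Suc falling_factorial_def algebra_simps)
    finally show "(L * V) $$ (i,j) = W $$ (i,j)" .
  qed (simp_all add: L_def V_def W_def)
  then have "det V = det W"
    using det_mult[OF L V] det_L by simp
  also have "det W = (\<Sum>i<Suc r. W $$ (i,0) * cofactor W i 0)"
    by (rule laplace_expansion_column) (simp_all add: W_def)
  also have "\<dots> = det (mat_delete W 0 0)"
    by (simp add: W_def cofactor_def lessThan_Suc_eq_insert_0 sum.reindex)
  also have "mat_delete W 0 0 =
      mat r r (\<lambda>(i,j). 1 * (x (Suc j) - x 0) * falling_factorial (x (Suc j)) i)"
    by (intro eq_matI) (auto simp: mat_delete_def W_def)
  also have "det \<dots> = (\<Prod>j<r. x (Suc j) - x 0) *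
      det (mat r r (\<lambda>(i,j). falling_factorial ((x \<circ> Suc) j) i))"
    by (subst det_mat_scale_rows_cols) simp
  also have "\<dots> = (\<Prod>j<r. x (Suc j) - x 0) * (\<Prod>j<r. \<Prod>i<j. x (Suc j) - x (Suc i))"
    by (simp add: Suc.IH)
  also have "\<dots> = (\<Prod>j<Suc r. \<Prod>i<j. x j - x i)"
    by (simp only: prod.lessThan_Suc_shift) (simp add: prod.distrib)
  finally show ?case by (simp add: V_def)
qed

lemma falling_factorial_of_nat:
  "falling_factorial (of_nat m :: 'a::field_char_0) i =
   (if i \<le> m then fact m / fact (m - i) else 0)"
proof (induction i)
  case 0
  then show ?case by (simp add: falling_factorial_def)
next
  case (Suc i)
  show ?case
  proof (cases "Suc i \<le> m")
    case True
    then have "(fact (m - i) :: 'a) = of_nat (m - i) * fact (m - Suc i)"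
      by (metis Suc_diff_Suc Suc_le_lessD fact_Suc)
    with True Suc.IH show ?thesis
      by (simp add: falling_factorial_Suc field_simps)
  next
    case False
    then show ?thesis
      using Suc.IH by (cases "i = m") (simp_all add: falling_factorial_Suc)
  qed
qed

lemma falling_factorial_of_nat_eq_toeplitz:
  "falling_factorial (of_nat m :: 'a::field_char_0) i =
   fact m * upper_toeplitz (fps_nth (fps_exp 1)) i m"
  by (simp add: falling_factorial_of_nat upper_toeplitz_def)

lemma appell_higher_pderiv:
  assumes "appell A"
  shows "(pderiv ^^ i) (A m) = smult (falling_factorial (of_nat m) i) (A (m - i))"
proof (induction i)
  case 0
  then show ?case by (simp add: falling_factorial_def)
next
  case (Suc i)
  show ?case
  proof (cases "i < m")
    case True
    then have "pderiv (A (m - i)) = smult (of_nat m - of_nat i) (A (m - Suc i))"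
      using assms by (simp add: appell_def)
    then show ?thesis
      using Suc.IH by (simp add: pderiv_smult falling_factorial_Suc mult.commute)
  next
    case False
    then have "A (m - i) = 1" "falling_factorial (of_nat m :: complex) (Suc i) = 0"
      using assms by (simp_all add: appell_def falling_factorial_of_nat)
    then show ?thesis
      using Suc.IH by simp
  qed
qed

definition appell_series :: "(nat \<Rightarrow> complex poly) \<Rightarrow> complex \<Rightarrow> complex fps" where
  "appell_series A x = Abs_fps (\<lambda>k. poly (A k) x / fact k)"

lemma appell_series_nth_0: "appell A \<Longrightarrow> appell_series A x $ 0 = 1"
  by (simp add: appell_series_def appell_def)

lemma poly_appell_higher_pderiv:
  assumes "appell A"
  shows "poly ((pderiv ^^ i) (A m)) x = fact m * upper_toeplitz (fps_nth (appell_series A x)) i m"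
  by (simp add: appell_higher_pderiv[OF assms] falling_factorial_of_nat upper_toeplitz_def
      appell_series_def)

lemma poly_wronskian_appell:
  assumes "appell A"
  shows "poly (wronskian r (\<lambda>j. A (d j))) x =
    (\<Prod>j<r. fact (d j)) * det (mat r r (\<lambda>(i,j). upper_toeplitz (fps_nth (appell_series A x)) i (d j)))"
proof -
  interpret comm_ring_hom "\<lambda>p. poly p x" by unfold_locales auto
  have "poly (wronskian r (\<lambda>j. A (d j))) x =
      det (map_mat (\<lambda>p. poly p x) (mat r r (\<lambda>(i,j). (pderiv ^^ i) (A (d j)))))"
    by (simp add: wronskian_def)
  also have "map_mat (\<lambda>p. poly p x) (mat r r (\<lambda>(i,j). (pderiv ^^ i) (A (d j)))) =
      mat r r (\<lambda>(i,j). 1 * fact (d j) * upper_toeplitz (fps_nth (appell_series A x)) i (d j))"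
    by (intro eq_matI) (auto simp: poly_appell_higher_pderiv[OF assms])
  finally show ?thesis
    unfolding det_mat_scale_rows_cols by simp
qed

lemma vandermonde_eq_toeplitz:
  "vandermonde r d =
   (\<Prod>j<r. fact (d j)) * det (mat r r (\<lambda>(i,j). upper_toeplitz (fps_nth (fps_exp 1)) i (d j)))"
proof -
  have "vandermonde r d = det (mat r r (\<lambda>(i,j). falling_factorial (of_nat (d j)) i))"
    by (simp add: vandermonde_def det_falling_factorial_vandermonde)
  also have "mat r r (\<lambda>(i,j). falling_factorial (of_nat (d j)) i) =
      mat r r (\<lambda>(i,j). 1 * fact (d j) * upper_toeplitz (fps_nth (fps_exp (1::complex))) i (d j))"
    by (intro eq_matI) (simp_all add: falling_factorial_of_nat_eq_toeplitz)
  finally show ?thesis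
    unfolding det_mat_scale_rows_cols by simp
qed

lemma poly_appell_partition:
  assumes "appell A"
  shows "poly (appell_partition A lam) x =
    jacobi_trudi (fps_nth (appell_series A x)) lam / jacobi_trudi (fps_nth (fps_exp 1)) lam"
proof -
  have "(\<Prod>j<length lam. fact (partition_degrees lam j)) \<noteq> (0::complex)"
    by simp
  then show ?thesis
    by (simp add: appell_partition_def poly_wronskian_appell[OF assms] vandermonde_eq_toeplitz
        jacobi_trudi_def)
qed

lemma appell_partition_Nil: "appell_partition A [] = 1"
  by (simp add: appell_partition_def wronskian_def vandermonde_def)

lemma appell_partition_single:
  assumes "appell A" and "0 < n"
  shows "appell_partition A [n] = A n"
proof -
  have "poly (appell_partition A [n]) x = poly (A n) x" for x
    by (simp add: poly_appell_partition[OF assms(1)] appell_series_def)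
  then show ?thesis
    using poly_eq_poly_eq_iff by blast
qed

lemma appell_coeff:
  assumes "appell A"
  shows "coeff (A n) m * fact m = falling_factorial (of_nat n) m * poly (A (n - m)) 0"
proof -
  have "coeff ((pderiv ^^ m) (A n)) 0 = fact m * coeff (A n) m"
    using coeff_higher_pderiv[of m "A n" 0] by (simp add: pochhammer_fact)
  then show ?thesis
    by (simp add: appell_higher_pderiv[OF assms] poly_0_coeff_0 mult.commute)
qed

lemma appell_series_eq_exp_mult:
  assumes "appell A"
  shows "appell_series A x = fps_exp x * appell_f A"
proof (rule fps_ext)
  fix n
  have "coeff (A n) i = 0" if "n < i" for i
    using appell_coeff[OF assms, of n i] that by (simp add: falling_factorial_of_nat)
  then have "degree (A n) \<le> n"
    by (simp add: degree_le)
  then have "poly (A n) x = (\<Sum>i\<le>n. coeff (A n) i * x ^ i)"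
    by (simp add: poly_altdef sum.mono_neutral_left coeff_eq_0 flip: ivl_disj_un_one)
  then have "appell_series A x $ n = (\<Sum>i\<le>n. coeff (A n) i * x ^ i / fact n)"
    by (simp add: appell_series_def sum_divide_distrib)
  also have "\<dots> = (\<Sum>i=0..n. x ^ i / fact i * (poly (A (n - i)) 0 / fact (n - i)))"
    unfolding atLeast0AtMost
  proof (intro sum.cong refl)
    fix i assume "i \<in> {..n}"
    then show "coeff (A n) i * x ^ i / fact n = x ^ i / fact i * (poly (A (n - i)) 0 / fact (n - i))"
      using appell_coeff[OF assms, of n i]
      by (simp add: falling_factorial_of_nat field_simps)
  qed
  also have "\<dots> = (fps_exp x * appell_f A) $ n"
    by (simp add: fps_mult_nth appell_f_def)
  finally show "appell_series A x $ n = (fps_exp x * appell_f A) $ n" .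
qed

section \<open>Self-duality\<close>

lemma fps_compose_uminus_X_compose_uminus_X [simp]:
  "(f oo - fps_X) oo - fps_X = (f :: 'a::comm_ring_1 fps)"
proof (rule fps_ext)
  fix n
  have "(-1::'a)^n * (-1)^n = 1"
    by (simp flip: power_mult_distrib)
  then show "((f oo - fps_X) oo - fps_X) $ n = f $ n"
    by (simp flip: mult.assoc)
qed

lemma fps_exp_mult_exp_neg: "fps_exp (x::'a::field_char_0) * fps_exp (- x) = 1"
  by (simp add: fps_exp_neg inverse_mult_eq_1')

lemma fps_exp_mult_compose_uminus_X: "fps_exp (x::'a::field_char_0) * (fps_exp x oo - fps_X) = 1"
  by (simp add: fps_exp_mult_exp_neg)

lemma appell_series_mult_reflect:
  assumes "appell A"
  shows "appell_series A x * (appell_series A x oo - fps_X) = appell_f A * (appell_f A oo - fps_X)"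
proof -
  have "appell_series A x * (appell_series A x oo - fps_X) =
        (fps_exp x * fps_exp (- x)) * (appell_f A * (appell_f A oo - fps_X))"
    by (simp add: appell_series_eq_exp_mult[OF assms] fps_compose_mult_distrib algebra_simps)
  then show ?thesis
    by (simp add: fps_exp_mult_exp_neg)
qed

lemma poly_appell_dual:
  assumes "appell A"
  shows "poly (appell_dual A n) x = fact n * inverse (appell_series A x oo - fps_X) $ n"
proof (cases "n = 0")
  case True
  then show ?thesis
    by (simp add: appell_dual_def appell_partition_Nil appell_series_nth_0[OF assms])
next
  case False
  define H where "H = appell_series A x"
  define E where "E = inverse (H oo - fps_X)"
  have H0: "H $ 0 = 1"
    by (simp add: H_def appell_series_nth_0[OF assms])
  have "H * (E oo - fps_X) = 1"
    using H0 by (simp add: E_def fps_inverse_compose inverse_mult_eq_1')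
  then have JE: "jacobi_trudi (fps_nth H) (replicate n 1) = E $ n"
    using jacobi_trudi_conj_partition[of H E "[n]"] H0 False by (simp add: conj_partition_single)
  have J1: "jacobi_trudi (fps_nth (fps_exp 1)) (replicate n 1) = fps_exp (1::complex) $ n"
    using jacobi_trudi_conj_partition[OF fps_exp_mult_compose_uminus_X, of "1::complex" "[n]"] False
    by (simp add: conj_partition_single)
  show ?thesis
    unfolding appell_dual_def poly_appell_partition[OF assms] H_def[symmetric] E_def[symmetric] JE J1
    by simp
qed

lemma fps_eq_inverse_iff_mult_eq_1:
  fixes f g :: "'a::field fps"
  assumes "g $ 0 \<noteq> 0"
  shows "f = inverse g \<longleftrightarrow> f * g = 1"
  using assms fps_inverse_unique[of g f] by (auto simp: inverse_mult_eq_1 mult.commute)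

lemma appell_self_dual_iff:
  assumes "appell A"
  shows "(\<forall>n. A n = appell_dual A n) \<longleftrightarrow> appell_f A * (appell_f A oo - fps_X) = 1"
proof -
  have "A n = appell_dual A n \<longleftrightarrow>
        (\<forall>x. fact n * appell_series A x $ n = fact n * inverse (appell_series A x oo - fps_X) $ n)"
    for n
    by (simp add: poly_eq_poly_eq_iff[symmetric] fun_eq_iff poly_appell_dual[OF assms]
        appell_series_def)
  then have "(\<forall>n. A n = appell_dual A n) \<longleftrightarrow>
             (\<forall>x. appell_series A x = inverse (appell_series A x oo - fps_X))"
    by (auto simp: fps_eq_iff)
  also have "\<dots> \<longleftrightarrow> (\<forall>x. appell_series A x * (appell_series A x oo - fps_X) = 1)"
    by (simp add: fps_eq_inverse_iff_mult_eq_1 appell_series_nth_0[OF assms])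
  finally show ?thesis
    by (simp add: appell_series_mult_reflect[OF assms])
qed

lemma appell_partition_conj_partition:
  assumes "appell A" and "appell_f A * (appell_f A oo - fps_X) = 1"
    and "sorted_wrt (\<ge>) lam"
  shows "appell_partition A lam = appell_partition A (conj_partition lam)"
proof -
  have "poly (appell_partition A lam) x = poly (appell_partition A (conj_partition lam)) x" for x
    using jacobi_trudi_conj_partition[of "appell_series A x" "appell_series A x" lam]
      jacobi_trudi_conj_partition[OF fps_exp_mult_compose_uminus_X, of "1::complex" lam] assms
    by (simp add: poly_appell_partition appell_series_mult_reflect appell_series_nth_0)
  then show ?thesis
    using poly_eq_poly_eq_iff by blast
qed

section \<open>Logarithms of power series\<close>

lemma fps_log_nth_0 [simp]: "fps_log f $ 0 = 0"
  by (simp add: fps_log_def)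

lemma fps_deriv_fps_log: "fps_deriv (fps_log f) = fps_deriv f / f"
  by (simp add: fps_log_def fps_deriv_fps_integral)

lemma fps_ext_deriv:
  fixes f g :: "'a::{ring_1_no_zero_divisors,semiring_char_0} fps"
  assumes "fps_deriv f = fps_deriv g" and "f $ 0 = g $ 0"
  shows "f = g"
  using assms by (simp add: fps_deriv_eq_iff)

lemma fps_log_mult:
  assumes "f $ 0 \<noteq> 0" and "g $ 0 \<noteq> 0"
  shows "fps_log (f * g) = fps_log f + fps_log g"
proof -
  have "fps_deriv (f * g) / (f * g) =
        (fps_deriv f * g + f * fps_deriv g) * (inverse f * inverse g)"
    using assms by (simp add: fps_divide_unit fps_inverse_mult)
  also have "\<dots> = fps_deriv f * inverse f * (g * inverse g) +
                   fps_deriv g * inverse g * (f * inverse f)"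
    by (simp add: ring_distribs ac_simps)
  also have "\<dots> = fps_deriv f / f + fps_deriv g / g"
    using assms by (simp add: inverse_mult_eq_1' fps_divide_unit)
  finally have "fps_deriv (fps_log (f * g)) = fps_deriv (fps_log f + fps_log g)"
    by (simp only: fps_deriv_fps_log fps_deriv_add)
  then show ?thesis
    by (rule fps_ext_deriv) simp
qed

lemma fps_log_compose_uminus_X:
  assumes "f $ 0 \<noteq> 0"
  shows "fps_log (f oo - fps_X) = fps_log f oo - fps_X"
proof -
  have "fps_deriv (f oo - fps_X) / (f oo - fps_X) =
        - ((fps_deriv f oo - fps_X) * inverse (f oo - fps_X))"
    using assms by (simp add: fps_compose_deriv fps_divide_unit)
  also have "\<dots> = - ((fps_deriv f * inverse f) oo - fps_X)"
    using assms by (simp add: fps_compose_mult_distrib fps_inverse_compose)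
  also have "\<dots> = fps_deriv (fps_log f oo - fps_X)"
    using assms by (simp add: fps_compose_deriv fps_deriv_fps_log fps_divide_unit)
  finally have "fps_deriv (fps_log (f oo - fps_X)) = fps_deriv (fps_log f oo - fps_X)"
    by (simp only: fps_deriv_fps_log)
  then show ?thesis
    by (rule fps_ext_deriv) simp
qed

lemma fps_log_eq_0_iff:
  assumes "f $ 0 = 1"
  shows "fps_log f = 0 \<longleftrightarrow> f = 1"
proof
  assume "fps_log f = 0"
  then have "fps_deriv f * inverse f = 0"
    using assms fps_deriv_fps_log[of f] by (simp add: fps_divide_unit)
  then have "fps_deriv f = 0"
    using assms by simp
  then have "f = fps_const (f $ 0)"
    by (simp only: fps_deriv_eq_0_iff)
  then show "f = 1"
    using assms by simp
qed (simp add: fps_log_def fps_integral0_zero)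

lemma fps_add_compose_uminus_X_eq_0_iff:
  "(f::'a::field_char_0 fps) + (f oo - fps_X) = 0 \<longleftrightarrow> (\<forall>n. even n \<longrightarrow> f $ n = 0)"
proof -
  have "f $ n + (-1)^n * f $ n = 0 \<longleftrightarrow> (even n \<longrightarrow> f $ n = 0)" for n
    by (cases "even n") (simp_all flip: mult_2)
  then show ?thesis
    by (simp add: fps_eq_iff)
qed

lemma fps_log_even_nth_eq_0_iff:
  assumes "f $ 0 = 1"
  shows "(\<forall>n. 0 < n \<and> even n \<longrightarrow> fps_log f $ n = 0) \<longleftrightarrow> f * (f oo - fps_X) = 1"
proof -
  have "(\<forall>n. 0 < n \<and> even n \<longrightarrow> fps_log f $ n = 0) \<longleftrightarrow>
        fps_log f + (fps_log f oo - fps_X) = 0"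
    unfolding fps_add_compose_uminus_X_eq_0_iff by (metis fps_log_nth_0 gr0I)
  also have "\<dots> \<longleftrightarrow> fps_log (f * (f oo - fps_X)) = 0"
    using assms by (simp add: fps_log_mult fps_log_compose_uminus_X)
  also have "\<dots> \<longleftrightarrow> f * (f oo - fps_X) = 1"
    using assms by (simp add: fps_log_eq_0_iff)
  finally show ?thesis .
qed

theorem corollary5p7:
  fixes A :: "nat \<Rightarrow> complex poly"
  assumes "appell A"
  shows "((\<forall>n. A n = appell_dual A n) \<longleftrightarrow>
           (\<forall>lam. is_partition lam \<longrightarrow>
                  appell_partition A lam = appell_partition A (conj_partition lam)))
       \<and> ((\<forall>lam. is_partition lam \<longrightarrow>
                  appell_partition A lam = appell_partition A (conj_partition lam)) \<longleftrightarrow>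
           (\<forall>n. 0 < n \<and> even n \<longrightarrow> appell_c A n = 0))"
proof -
  let ?reflect = "appell_f A * (appell_f A oo - fps_X) = 1"
  have f0: "appell_f A $ 0 = 1"
    using assms by (simp add: appell_f_def appell_def)
  have self_dual: "(\<forall>n. A n = appell_dual A n) \<longleftrightarrow> ?reflect"
    by (rule appell_self_dual_iff[OF assms])
  have even_c: "(\<forall>n. 0 < n \<and> even n \<longrightarrow> appell_c A n = 0) \<longleftrightarrow> ?reflect"
    using fps_log_even_nth_eq_0_iff[OF f0] by (simp add: appell_c_def)
  have conj: "appell_partition A lam = appell_partition A (conj_partition lam)"
    if ?reflect and "is_partition lam" for lam
    using appell_partition_conj_partition[OF assms that(1)] that(2) by (simp add: is_partition_def)
  have "A n = appell_dual A n"
    if conj_inv: "\<forall>lam. is_partition lam \<longrightarrow>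
                    appell_partition A lam = appell_partition A (conj_partition lam)" for n
  proof (cases "n = 0")
    case True
    then show ?thesis
      using assms by (simp add: appell_def appell_dual_def appell_partition_Nil)
  next
    case False
    then show ?thesis
      using conj_inv[rule_format, of "[n]"]
      by (simp add: is_partition_def appell_partition_single[OF assms] conj_partition_single
          appell_dual_def)
  qed
  then show ?thesis
    using self_dual even_c conj by blast
qed

end
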